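(* For every nonnegative integer $r$, $$\sum_{n=1}^{\infty}\frac{1}{(2n+1)(2n+2r+1)4^n}\frac{\binom{4n}{2n}}{\binom{2n+2r}{n+r}}=\frac{1}{2^{2r-1}}K(r)-\frac{1}{(2r+1)\binom{2r}{r}},$$ where $$K(r)=\frac{16^r}{(4r+1)\binom{4r}{2r}}\left(2+\sqrt{2}\sum_{k=0}^r \frac{\binom{4k}{2k}}{(4k-1)16^k}\right).$$ *)

theory Defs
  imports Complex_Main
begin

definition K :: "nat \<Rightarrow> real" where
  "K r = 16 ^ r / ((4 * real r + 1) * real ((4 * r) choose (2 * r))) *
     (2 + sqrt 2 * (\<Sum>k = 0..r. real ((4 * k) choose (2 * k)) / ((4 * real k - 1) * 16 ^ k)))"

end

theory Submission
  imports Defs "HOL-Analysis.Analysis" "HOL-Real_Asymp.Real_Asymp"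
begin

(* With c n = (2n choose n) / 4^n the n-th summand is
   f r n = c (2n) / (c (n + r) (2n + 1) (2n + 2r + 1) 4^r).
   Creative telescoping in r gives
     f (r + 1) n = a r * f r n + (G r (n + 1) - G r n),
     a r = 2 (2r + 1)(r + 1) / ((4r + 3)(4r + 5)),
     G r n = 2n (2n + 1) / ((4r + 3)(4r + 5)) * f r n,
   so the sums S r obey S (r + 1) = a r * S r + lim G r - G r 1, while for r = 0 the summand
   telescopes by itself: f 0 n = 4 (v n - v (n + 1)) with v n = c (2n) / c n.
   Both limits come down to v n --> 1 / sqrt 2, which follows from Wallis' product
   through c n ^ 2 (2n + 1) --> 2 / pi. *)

lemma central_binomial_Suc:
  "Suc n * ((2 * Suc n) choose Suc n) = 2 * (2 * n + 1) * ((2 * n) choose n)"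
  by (metis Suc_eq_plus1 Suc_times_binomial_add add_2_eq_Suc add_mult_distrib binomial_absorption
      diff_add_inverse mult_Suc_right mult_numeral_1)

definition cbinom :: "nat \<Rightarrow> real" where
  "cbinom n = real ((2 * n) choose n) / 4 ^ n"

lemma of_nat_central_binomial: "real ((2 * n) choose n) = cbinom n * 4 ^ n"
  by (simp add: cbinom_def)

lemma cbinom_0 [simp]: "cbinom 0 = 1"
  by (simp add: cbinom_def)

lemma cbinom_pos: "cbinom n > 0"
  by (simp add: cbinom_def)

lemma cbinom_Suc: "cbinom (Suc n) = cbinom n * (2 * real n + 1) / (2 * real n + 2)"
proof -
  define c c' where "c = real ((2 * n) choose n)" and "c' = real ((2 * Suc n) choose Suc n)"
  have "(real n + 1) * c' = 2 * (2 * real n + 1) * c"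
    using arg_cong[OF central_binomial_Suc[of n], of real]
    unfolding of_nat_mult c_def[symmetric] c'_def[symmetric] by (simp add: algebra_simps)
  moreover have "real n + 1 \<noteq> 0" "2 * real n + 2 \<noteq> 0"
    by linarith+
  ultimately show ?thesis
    unfolding cbinom_def c_def[symmetric] c'_def[symmetric]
    by (simp add: divide_simps) (simp add: algebra_simps)
qed

lemma cbinom_double_Suc:
  "cbinom (2 * Suc n) =
     cbinom (2 * n) * (4 * real n + 1) * (4 * real n + 3) / ((4 * real n + 2) * (4 * real n + 4))"
proof -
  have "2 * Suc n = Suc (Suc (2 * n))" by simp
  then show ?thesis
    by (simp only: cbinom_Suc) (simp add: field_simps)
qed

lemma cbinom_sq_mult_wallis_prod:
  "cbinom n ^ 2 * (2 * real n + 1) * (\<Prod>k=1..n. 4 * real k ^ 2 / (4 * real k ^ 2 - 1)) = 1"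
proof (induction n)
  case 0
  then show ?case by simp
next
  case (Suc n)
  have factor: "4 * real (Suc n) ^ 2 / (4 * real (Suc n) ^ 2 - 1) =
      4 * (real n + 1) ^ 2 / ((2 * real n + 1) * (2 * real n + 3))"
    by (simp add: algebra_simps power2_eq_square)
  have "2 * real n + 1 \<noteq> 0" "2 * real n + 2 \<noteq> 0" "2 * real n + 3 \<noteq> 0"
    by linarith+
  then have ratio: "cbinom (Suc n) ^ 2 * (2 * real (Suc n) + 1) *
      (4 * real (Suc n) ^ 2 / (4 * real (Suc n) ^ 2 - 1)) = cbinom n ^ 2 * (2 * real n + 1)"
    unfolding factor cbinom_Suc
    by (simp add: divide_simps) (simp add: algebra_simps power2_eq_square)
  moreover have "(\<Prod>k=1..Suc n. 4 * real k ^ 2 / (4 * real k ^ 2 - 1)) =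
      4 * real (Suc n) ^ 2 / (4 * real (Suc n) ^ 2 - 1) *
      (\<Prod>k=1..n. 4 * real k ^ 2 / (4 * real k ^ 2 - 1))"
    by (rule prod.nat_ivl_Suc') simp
  ultimately show ?case
    using Suc.IH by (simp only: ratio mult.assoc[symmetric])
qed

lemma tendsto_cbinom_sq: "(\<lambda>n. cbinom n ^ 2 * (2 * real n + 1)) \<longlonglongrightarrow> 2 / pi"
proof -
  have "(\<lambda>n. 1 / (\<Prod>k=1..n. 4 * real k ^ 2 / (4 * real k ^ 2 - 1)))
      \<longlonglongrightarrow> 1 / (pi / 2)"
    by (intro tendsto_divide tendsto_const wallis) simp
  moreover have
    "cbinom n ^ 2 * (2 * real n + 1) = 1 / (\<Prod>k=1..n. 4 * real k ^ 2 / (4 * real k ^ 2 - 1))"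
    for n
  proof -
    define P where "P = (\<Prod>k=1..n. 4 * real k ^ 2 / (4 * real k ^ 2 - 1))"
    have "cbinom n ^ 2 * (2 * real n + 1) * P = 1"
      unfolding P_def by (rule cbinom_sq_mult_wallis_prod)
    moreover from this have "P \<noteq> 0"
      by auto
    ultimately show ?thesis
      unfolding P_def[symmetric] by (simp add: eq_divide_eq)
  qed
  ultimately show ?thesis
    by simp
qed

lemma tendsto_cbinom_double_ratio: "(\<lambda>n. cbinom (2 * n) / cbinom n) \<longlonglongrightarrow> 1 / sqrt 2"
proof -
  have "(\<lambda>n. cbinom (2 * n) ^ 2 * (4 * real n + 1)) \<longlonglongrightarrow> 2 / pi"
    using LIMSEQ_subseq_LIMSEQ[OF tendsto_cbinom_sq, of "\<lambda>n. 2 * n"]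
    by (simp add: strict_mono_def o_def)
  moreover have "(\<lambda>n. (2 * real n + 1) / (4 * real n + 1)) \<longlonglongrightarrow> 1 / 2"
    by real_asymp
  ultimately have "(\<lambda>n. cbinom (2 * n) ^ 2 * (4 * real n + 1) / (cbinom n ^ 2 * (2 * real n + 1))
      * ((2 * real n + 1) / (4 * real n + 1)))
      \<longlonglongrightarrow> (2 / pi) / (2 / pi) * (1 / 2)"
    by (intro tendsto_mult tendsto_divide[where b = "2 / pi"] tendsto_cbinom_sq) auto
  moreover have "cbinom (2 * n) ^ 2 * (4 * real n + 1) / (cbinom n ^ 2 * (2 * real n + 1))
      * ((2 * real n + 1) / (4 * real n + 1)) = (cbinom (2 * n) / cbinom n) ^ 2" for n
  proof -
    have "4 * real n + 1 \<noteq> 0" "2 * real n + 1 \<noteq> 0"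
      by linarith+
    then show ?thesis
      using cbinom_pos[of n] by (simp add: divide_simps power2_eq_square)
  qed
  ultimately have "(\<lambda>n. (cbinom (2 * n) / cbinom n) ^ 2) \<longlonglongrightarrow> 1 / 2"
    by simp
  then have "(\<lambda>n. sqrt ((cbinom (2 * n) / cbinom n) ^ 2)) \<longlonglongrightarrow> sqrt (1 / 2)"
    by (rule tendsto_real_sqrt)
  then show ?thesis
    using cbinom_pos by (simp add: real_sqrt_divide less_imp_le)
qed

lemma tendsto_cbinom_shift_ratio: "(\<lambda>n. cbinom n / cbinom (n + r)) \<longlonglongrightarrow> 1"
proof (induction r)
  case 0
  then show ?case
    using cbinom_pos by (simp add: less_imp_neq[symmetric])
next
  case (Suc r)
  have "(\<lambda>n. (2 * real (n + r) + 2) / (2 * real (n + r) + 1)) \<longlonglongrightarrow> 1"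
    by real_asymp
  then have "(\<lambda>n. cbinom n / cbinom (n + r) * ((2 * real (n + r) + 2) / (2 * real (n + r) + 1)))
      \<longlonglongrightarrow> 1 * 1"
    by (intro tendsto_mult Suc.IH)
  moreover have "cbinom n / cbinom (n + Suc r) =
      cbinom n / cbinom (n + r) * ((2 * real (n + r) + 2) / (2 * real (n + r) + 1))" for n
  proof -
    have "2 * real (n + r) + 1 \<noteq> 0" "2 * real (n + r) + 2 \<noteq> 0"
      by linarith+
    then show ?thesis
      using cbinom_pos[of "n + r"] by (simp add: cbinom_Suc divide_simps)
  qed
  ultimately show ?case
    by simp
qed

definition series_term :: "nat \<Rightarrow> nat \<Rightarrow> real" where
  "series_term r n = cbinom (2 * n) /
     (cbinom (n + r) * (2 * real n + 1) * (2 * real n + 2 * real r + 1) * 4 ^ r)"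

definition telescoper :: "nat \<Rightarrow> nat \<Rightarrow> real" where
  "telescoper r n =
     2 * real n * (2 * real n + 1) / ((4 * real r + 3) * (4 * real r + 5)) * series_term r n"

definition series_value :: "nat \<Rightarrow> real" where
  "series_value r =
     2 * (2 + sqrt 2 * (\<Sum>k=0..r. cbinom (2 * k) / (4 * real k - 1))) /
       ((4 * real r + 1) * cbinom (2 * r) * 4 ^ r)
     - 1 / ((2 * real r + 1) * cbinom r * 4 ^ r)"

lemma series_term_Suc:
  "series_term (Suc r) n =
     2 * (2 * real r + 1) * (real r + 1) / ((4 * real r + 3) * (4 * real r + 5)) * series_term r n
     + (telescoper r (Suc n) - telescoper r n)"
proof -
  have shift:
    "cbinom (Suc n + r) = cbinom (n + r) * (2 * real n + 2 * real r + 1) / (2 * real n + 2 * real r + 2)"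
    "cbinom (n + Suc r) = cbinom (n + r) * (2 * real n + 2 * real r + 1) / (2 * real n + 2 * real r + 2)"
    using cbinom_Suc[of "n + r"] by (simp_all add: algebra_simps)
  have "cbinom (2 * n) \<noteq> 0" "cbinom (n + r) \<noteq> 0"
    using cbinom_pos by (simp_all add: less_imp_neq[symmetric])
  moreover have "2 * real n + 2 * real r + 1 \<noteq> 0" "2 * real n + 2 * real r + 2 \<noteq> 0"
    "2 * real n + 1 \<noteq> 0" "4 * real n + 2 \<noteq> 0" "4 * real n + 4 \<noteq> 0"
    "4 * real r + 3 \<noteq> 0" "4 * real r + 5 \<noteq> 0" "2 * real n + 3 \<noteq> 0"
    "2 * real n + 2 * real r + 3 \<noteq> 0"
    by linarith+
  ultimately show ?thesis
    unfolding series_term_def telescoper_def cbinom_double_Suc shift of_nat_Suc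
    by (simp add: divide_simps) (simp add: algebra_simps)
qed

lemma tendsto_telescoper:
  "telescoper r \<longlonglongrightarrow> sqrt 2 / (2 * (4 * real r + 3) * (4 * real r + 5) * 4 ^ r)"
proof -
  define c where "c = 2 / ((4 * real r + 3) * (4 * real r + 5) * 4 ^ r)"
  have factored: "telescoper r = (\<lambda>n. c * (real n / (2 * real n + 2 * real r + 1)) *
      (cbinom (2 * n) / cbinom n) * (cbinom n / cbinom (n + r)))"
  proof
    fix n
    have "2 * real n + 1 \<noteq> 0" "2 * real n + 2 * real r + 1 \<noteq> 0"
      by linarith+
    then show "telescoper r n = c * (real n / (2 * real n + 2 * real r + 1)) *
        (cbinom (2 * n) / cbinom n) * (cbinom n / cbinom (n + r))"
      using cbinom_pos[of n] cbinom_pos[of "n + r"]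
      unfolding telescoper_def series_term_def c_def by (simp add: divide_simps)
  qed
  have limit:
    "c * (1 / 2) * (1 / sqrt 2) * 1 = sqrt 2 / (2 * (4 * real r + 3) * (4 * real r + 5) * 4 ^ r)"
  proof -
    have "1 / sqrt 2 = sqrt 2 / (2 :: real)"
      by (simp add: field_simps)
    then show ?thesis
      unfolding c_def by (simp only:) (simp add: field_simps)
  qed
  have "(\<lambda>n. real n / (2 * real n + 2 * real r + 1)) \<longlonglongrightarrow> 1 / 2"
    by real_asymp
  then show ?thesis
    unfolding factored limit[symmetric]
    by (intro tendsto_mult tendsto_const tendsto_cbinom_double_ratio tendsto_cbinom_shift_ratio)
qed

lemma sums_series_term_0: "(\<lambda>m. series_term 0 (Suc m)) sums series_value 0"
proof -
  define v where "v n = cbinom (2 * n) / cbinom n" for n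
  have telescoping: "series_term 0 n = 4 * (v n - v (Suc n))" for n
  proof -
    have "2 * real n + 1 \<noteq> 0" "2 * real n + 2 \<noteq> 0" "4 * real n + 2 \<noteq> 0" "4 * real n + 4 \<noteq> 0"
      by linarith+
    then show ?thesis
      using cbinom_pos[of n] cbinom_pos[of "2 * n"]
      unfolding series_term_def v_def cbinom_double_Suc cbinom_Suc
      by (simp add: divide_simps) (simp add: algebra_simps)
  qed
  have "(\<lambda>m. v (Suc m)) \<longlonglongrightarrow> 1 / sqrt 2"
    unfolding v_def by (rule LIMSEQ_Suc[OF tendsto_cbinom_double_ratio])
  then have "(\<lambda>m. 4 * (v (Suc m) - v (Suc (Suc m)))) sums (4 * (v (Suc 0) - 1 / sqrt 2))"
    by (intro sums_mult telescope_sums')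
  moreover have "4 * (v (Suc 0) - 1 / sqrt 2) = series_value 0"
  proof -
    have "v (Suc 0) = 3 / 4"
      using cbinom_double_Suc[of 0] by (simp add: v_def cbinom_Suc[of 0])
    moreover have "1 / sqrt 2 = sqrt 2 / (2 :: real)"
      by (simp add: field_simps)
    ultimately show ?thesis
      unfolding series_value_def by simp
  qed
  ultimately show ?thesis
    unfolding telescoping by simp
qed

lemma series_value_Suc:
  "series_value (Suc r) =
     2 * (2 * real r + 1) * (real r + 1) / ((4 * real r + 3) * (4 * real r + 5)) * series_value r
     + (sqrt 2 / (2 * (4 * real r + 3) * (4 * real r + 5) * 4 ^ r) - telescoper r 1)"
proof -
  define P where "P = (\<Sum>k=0..r. cbinom (2 * k) / (4 * real k - 1))"
  have sum_Suc:
    "(\<Sum>k=0..Suc r. cbinom (2 * k) / (4 * real k - 1)) = P + cbinom (2 * Suc r) / (4 * real r + 3)"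
    unfolding P_def by (simp add: algebra_simps)
  have cbinom_2: "cbinom (2 * 1) = 3 / 8"
    using cbinom_double_Suc[of 0] by simp
  have "cbinom (2 * r) \<noteq> 0" "cbinom r \<noteq> 0"
    using cbinom_pos by (simp_all add: less_imp_neq[symmetric])
  moreover have "2 * real r + 1 \<noteq> 0" "2 * real r + 2 \<noteq> 0" "2 * real r + 3 \<noteq> 0"
    "4 * real r + 1 \<noteq> 0" "4 * real r + 2 \<noteq> 0" "4 * real r + 3 \<noteq> 0" "4 * real r + 4 \<noteq> 0"
    "4 * real r + 5 \<noteq> 0"
    by linarith+
  ultimately show ?thesis
    unfolding series_value_def sum_Suc P_def[symmetric] telescoper_def series_term_def cbinom_2
      cbinom_double_Suc cbinom_Suc cbinom_Suc[of r, unfolded Suc_eq_plus1_left] of_nat_Suc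
    by (simp add: divide_simps) (simp add: algebra_simps)
qed

lemma sums_mult_add_telescope:
  fixes f g :: "nat \<Rightarrow> 'a::real_normed_algebra"
  assumes "f sums s" and "g \<longlonglongrightarrow> l"
  shows "(\<lambda>n. c * f n + (g (Suc n) - g n)) sums (c * s + (l - g 0))"
  using assms by (intro sums_add sums_mult telescope_sums)

lemma sums_series_term: "(\<lambda>m. series_term r (Suc m)) sums series_value r"
proof (induction r)
  case 0
  then show ?case
    by (rule sums_series_term_0)
next
  case (Suc r)
  from Suc.IH LIMSEQ_Suc[OF tendsto_telescoper] show ?case
    unfolding series_term_Suc series_value_Suc One_nat_def by (rule sums_mult_add_telescope)
qed

lemma of_nat_central_binomial_double: "real ((4 * n) choose (2 * n)) = cbinom (2 * n) * 16 ^ n"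
  using of_nat_central_binomial[of "2 * n"] by (simp add: power_mult)

lemma series_term_eq_binomial:
  "series_term r n = 1 / ((2 * real n + 1) * (2 * real n + 2 * real r + 1) * 4 ^ n) *
     (real ((4 * n) choose (2 * n)) / real ((2 * n + 2 * r) choose (n + r)))"
proof -
  have "real ((2 * n + 2 * r) choose (n + r)) = cbinom (n + r) * 4 ^ n * 4 ^ r"
    using of_nat_central_binomial[of "n + r"] by (simp add: power_add algebra_simps)
  moreover have "(16 :: real) ^ n = 4 ^ n * 4 ^ n"
    by (simp flip: power_mult_distrib)
  moreover have "2 * real n + 1 \<noteq> 0" "2 * real n + 2 * real r + 1 \<noteq> 0"
    by linarith+
  ultimately show ?thesis
    using cbinom_pos[of "n + r"]
    unfolding series_term_def of_nat_central_binomial_double by (simp add: divide_simps)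
qed

lemma series_value_eq_K:
  "series_value r =
     K r / 2 powr (2 * real r - 1) - 1 / ((2 * real r + 1) * real ((2 * r) choose r))"
proof -
  have "(2 :: real) powr (2 * real r - 1) = 2 powr real (2 * r) / 2"
    by (simp add: powr_diff)
  also have "\<dots> = 4 ^ r / 2"
    by (simp only: powr_realpow zero_less_numeral power_mult) simp
  finally have two_powr: "(2 :: real) powr (2 * real r - 1) = 4 ^ r / 2" .
  have quarter:
    "real ((4 * k) choose (2 * k)) / ((4 * real k - 1) * 16 ^ k) = cbinom (2 * k) / (4 * real k - 1)"
    for k
    unfolding of_nat_central_binomial_double by simp
  have "4 * real r + 1 \<noteq> 0" "2 * real r + 1 \<noteq> 0"
    by linarith+
  then show ?thesis
    using cbinom_pos[of r] cbinom_pos[of "2 * r"]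
    unfolding series_value_def K_def quarter two_powr
      of_nat_central_binomial of_nat_central_binomial_double
    by (simp add: divide_simps)
qed

theorem theorem4p0p1:
  fixes r :: nat
  shows "(\<lambda>m. let n = m + 1 in
            1 / ((2 * real n + 1) * (2 * real n + 2 * real r + 1) * 4 ^ n) *
            (real ((4 * n) choose (2 * n)) / real ((2 * n + 2 * r) choose (n + r))))
         sums (K r / 2 powr (2 * real r - 1) - 1 / ((2 * real r + 1) * real ((2 * r) choose r)))"
  using sums_series_term[of r]
  unfolding series_term_eq_binomial series_value_eq_K Let_def Suc_eq_plus1 .

end
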